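(* Let $R$ be a nonzero $m\times m$ rational matrix function with no poles on $\mathbb{T}$ given by $R(z)=zC(I_n-zA)^{-1}\Gamma+R_0+\Gamma^*(zI_n-A^* )^{-1}C^*$ with $A$ stable $n\times n$, assume $R(\zeta)\ge0$ for all $\zeta\in\mathbb{T}$, and assume the pair $\{C,A\}$ is observable. Let $\Phi\in\mathfrak{R}H^\infty_{r\times m}$ be an outer spectral factor of $R$, $\mathcal{X}_\Phi=\{x\in\mathbb{C}^n:W_{obs}x\in\operatorname{Im}T_\Phi^*\}$, and $C_\Phi$ an $r\times n$ matrix with $\Phi(z)=\Phi(0)+zC_\Phi(I_n-zA)^{-1}\Gamma$ and $W_{obs}x=T_\Phi^*W_{\Phi,obs}x$ for $x\in\mathcal{X}_\Phi$; let $Q_\Phi$ be the observability Gramian of $\{C_\Phi,A\}$. Then $\Omega_\Phi=E_{\mathcal{X}_\Phi}^*Q_\Phi E_{\mathcal{X}_\Phi}:\mathcal{X}_\Phi\to\mathcal{X}_\Phi$ is invertible, and the orthogonal projection of $\ell^2_+(\mathbb{C}^r)$ onto the finite-dimensional space $\mathcal{M}_\Phi=\{f\in\ell^2_+(\mathbb{C}^r):T_\Phi^*f\in\operatorname{Im}W_{obs}\}$ is \[ P_{\mathcal{M}_\Phi}=W_{\Phi,obs}\,\Delta\, W_{\Phi,obs}^*,\qquad \Delta=E_{\mathcal{X}_\Phi}\Omega_\Phi^{-1}E_{\mathcal{X}_\Phi}^*:\mathbb{C}^n\to\mathbb{C}^n. \]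
   Context: $\mathbb{T}$ is the unit circle; a stable matrix has all eigenvalues in the open unit disc. $\mathfrak{R}H^\infty_{k\times l}$: $k\times l$ rational matrix functions without poles in the closed unit disc. $\ell^2_+(\mathbb{C}^k)$: square summable $\mathbb{C}^k$-valued sequences indexed by $j\ge0$; $T_\Omega$: block Toeplitz operator with $(i,j)$ block $\Omega_{i-j}$. $W_{obs}=\operatorname{col}(CA^j)_{j\ge0}$, $W_{\Phi,obs}=\operatorname{col}(C_\Phi A^j)_{j\ge0}$, $Q_\Phi=\sum_{\nu\ge0}(A^* )^\nu C_\Phi^*C_\Phi A^\nu$. An outer spectral factor of $R$ is $\Phi\in\mathfrak{R}H^\infty_{r\times m}$ with $R(z)=\Phi(1/\bar z)^*\Phi(z)$ and $T_\Phi$ of dense range. Observable: observability operator injective. $E_{\mathcal{X}_\Phi}:\mathcal{X}_\Phi\to\mathbb{C}^n$ is the canonical embedding, so $E_{\mathcal{X}_\Phi}^*$ is the orthogonal projection onto $\mathcal{X}_\Phi$ viewed as a map into $\mathcal{X}_\Phi$. *)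

theory Defs
  imports "HOL-Analysis.Analysis" "HOL-Computational_Algebra.Polynomial"
begin

text \<open>Finite-dimensional complex linear algebra on the type-indexed spaces
  complex^'n (vectors) and complex^'n^'m (m x n matrices, rows indexed by 'm).\<close>

definition cadj :: "complex^'n^'m \<Rightarrow> complex^'m^'n" where
  "cadj M = (\<chi> i j. cnj (M $ j $ i))"

definition csmat :: "complex \<Rightarrow> complex^'n^'m \<Rightarrow> complex^'n^'m" where
  "csmat c M = (\<chi> i j. c * M $ i $ j)"

definition mpow :: "complex^'n^'n \<Rightarrow> nat \<Rightarrow> complex^'n^'n" where
  "mpow A k = (((**) A) ^^ k) (mat 1)"

definition cinner :: "complex^'n \<Rightarrow> complex^'n \<Rightarrow> complex" where
  "cinner x y = (\<Sum>i\<in>UNIV. x $ i * cnj (y $ i))"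

definition stable :: "complex^'n^'n \<Rightarrow> bool" where
  "stable A \<longleftrightarrow> (\<forall>\<mu> v. v \<noteq> 0 \<and> A *v v = \<mu> *s v \<longrightarrow> norm \<mu> < 1)"

definition psd :: "complex^'n^'n \<Rightarrow> bool" where
  "psd M \<longleftrightarrow> (\<forall>x. Im (cinner (M *v x) x) = 0 \<and> Re (cinner (M *v x) x) \<ge> 0)"

definition observable :: "complex^'n^'m \<Rightarrow> complex^'n^'n \<Rightarrow> bool" where
  "observable C A \<longleftrightarrow> (\<forall>x. (\<forall>j. C *v (mpow A j *v x) = 0) \<longrightarrow> x = 0)"

definition Wobs :: "complex^'n^'m \<Rightarrow> complex^'n^'n \<Rightarrow> complex^'n \<Rightarrow> nat \<Rightarrow> complex^'m" where
  "Wobs C A x = (\<lambda>j. C *v (mpow A j *v x))"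

definition Wobs_adj :: "complex^'n^'m \<Rightarrow> complex^'n^'n \<Rightarrow> (nat \<Rightarrow> complex^'m) \<Rightarrow> complex^'n" where
  "Wobs_adj C A f = (\<Sum>j. cadj (mpow A j) *v (cadj C *v f j))"

definition obs_gramian :: "complex^'n^'m \<Rightarrow> complex^'n^'n \<Rightarrow> complex^'n^'n" where
  "obs_gramian C A = (\<Sum>\<nu>. cadj (mpow A \<nu>) ** cadj C ** C ** mpow A \<nu>)"

definition l2 :: "(nat \<Rightarrow> complex^'k) set" where
  "l2 = {f. summable (\<lambda>j. (norm (f j))\<^sup>2)}"

definition l2inner :: "(nat \<Rightarrow> complex^'k) \<Rightarrow> (nat \<Rightarrow> complex^'k) \<Rightarrow> complex" where
  "l2inner f g = (\<Sum>j. cinner (f j) (g j))"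

definition l2norm :: "(nat \<Rightarrow> complex^'k) \<Rightarrow> real" where
  "l2norm f = sqrt (\<Sum>j. (norm (f j))\<^sup>2)"

definition cproj :: "(complex^'n) set \<Rightarrow> complex^'n \<Rightarrow> complex^'n" where
  "cproj X x = (THE y. y \<in> X \<and> (\<forall>z\<in>X. cinner (x - y) z = 0))"

definition l2proj :: "(nat \<Rightarrow> complex^'k) set \<Rightarrow> (nat \<Rightarrow> complex^'k) \<Rightarrow> (nat \<Rightarrow> complex^'k)" where
  "l2proj M f = (THE g. g \<in> M \<and> (\<forall>h\<in>M. l2inner (\<lambda>j. f j - g j) h = 0))"

text \<open>Rational matrix functions without poles in the closed unit disc (RH^infty_{r x m}):
  entrywise quotients of polynomials by a common denominator q with no zeros
  in the closed unit disc; the (total) function agrees with the quotient wherever q is nonzero.\<close>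
definition rat_Hinf :: "(complex \<Rightarrow> complex^'m^'r) \<Rightarrow> bool" where
  "rat_Hinf \<Phi> \<longleftrightarrow> (\<exists>(P :: complex poly^'m^'r) q.
      (\<forall>z. norm z \<le> 1 \<longrightarrow> poly q z \<noteq> 0) \<and>
      (\<forall>z. poly q z \<noteq> 0 \<longrightarrow> \<Phi> z = (\<chi> i j. poly (P $ i $ j) z / poly q z)))"

definition regular_at :: "(complex \<Rightarrow> complex^'m^'r) \<Rightarrow> complex \<Rightarrow> bool" where
  "regular_at \<Phi> z \<longleftrightarrow> (\<forall>i j. (\<lambda>w. \<Phi> w $ i $ j) analytic_on {z})"

definition taylor_coeff :: "(complex \<Rightarrow> complex^'m^'r) \<Rightarrow> nat \<Rightarrow> complex^'m^'r" where
  "taylor_coeff \<Phi> k = (\<chi> i j. (deriv ^^ k) (\<lambda>w. \<Phi> w $ i $ j) 0 / fact k)"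

definition toeplitz :: "(complex \<Rightarrow> complex^'m^'r) \<Rightarrow> (nat \<Rightarrow> complex^'m) \<Rightarrow> nat \<Rightarrow> complex^'r" where
  "toeplitz \<Phi> f = (\<lambda>i. \<Sum>j\<le>i. taylor_coeff \<Phi> (i - j) *v f j)"

definition toeplitz_adj :: "(complex \<Rightarrow> complex^'m^'r) \<Rightarrow> (nat \<Rightarrow> complex^'r) \<Rightarrow> nat \<Rightarrow> complex^'m" where
  "toeplitz_adj \<Phi> g = (\<lambda>i. \<Sum>k. cadj (taylor_coeff \<Phi> k) *v g (i + k))"

text \<open>Outer spectral factor of R (R given as a total function, considered at the points
  where it is defined): Phi in RH^infty, R(z) = Phi(1/conj z)^* Phi(z) at all points where
  both sides are defined, and T_Phi has dense range in ell^2_+(C^r).\<close>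
definition outer_spectral_factor ::
  "(complex \<Rightarrow> complex^'m^'m) \<Rightarrow> (complex \<Rightarrow> bool) \<Rightarrow> (complex \<Rightarrow> complex^'m^'r) \<Rightarrow> bool" where
  "outer_spectral_factor R Rdef \<Phi> \<longleftrightarrow>
     rat_Hinf \<Phi> \<and>
     (\<forall>z. z \<noteq> 0 \<and> Rdef z \<and> regular_at \<Phi> z \<and> regular_at \<Phi> (1 / cnj z) \<longrightarrow>
          R z = cadj (\<Phi> (1 / cnj z)) ** \<Phi> z) \<and>
     (\<forall>g\<in>l2. \<forall>\<epsilon>>0. \<exists>f\<in>l2. l2norm (\<lambda>i. toeplitz \<Phi> f i - g i) < \<epsilon>)"

end

theory Submission
  imports Defs "Jordan_Normal_Form.Spectral_Radius" "HOL-Complex_Analysis.Cauchy_Integral_Formula"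
begin

no_notation Matrix.vec_index (infixl "$" 100)
hide_const (open) Matrix.mat Matrix.vec Determinant.det

section \<open>Complex matrices and the Frobenius norm\<close>

lemma mpow_0 [simp]: "mpow A 0 = mat 1"
  by (simp add: mpow_def)

lemma mpow_Suc: "mpow A (Suc k) = A ** mpow A k"
  by (simp add: mpow_def)

lemma mpow_Suc_right: "mpow A (Suc k) = mpow A k ** A"
  by (induction k) (simp_all add: mpow_Suc matrix_mul_assoc)

lemma mpow_scaleR: "mpow (c *\<^sub>R A) k = c ^ k *\<^sub>R mpow A k"
  by (induction k) (simp_all add: mpow_Suc matrix_scalar_ac flip: scalar_matrix_assoc)

lemma scaleR_matrix_vector_mult: "(c *\<^sub>R M) *v v = c *\<^sub>R (M *v (v :: complex^'n))"
  by (simp add: Finite_Cartesian_Product.vec_eq_iff matrix_vector_mult_def scaleR_sum_right)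

lemma scaleR_eq_of_real_scale: "r *\<^sub>R (x :: complex^'n) = complex_of_real r *s x"
  by (simp add: Finite_Cartesian_Product.vec_eq_iff) (simp add: scaleR_conv_of_real)

lemma cadj_cadj [simp]: "cadj (cadj M) = M"
  by (simp add: cadj_def Finite_Cartesian_Product.vec_eq_iff)

lemma norm_vec_scale: "norm (c *s (v :: complex^'k)) = norm c * norm v"
  by (simp add: norm_vec_def norm_mult L2_set_right_distrib)

lemma norm_sum_mult_le: "norm (\<Sum>i\<in>UNIV. x $ i * y $ i) \<le> norm x * norm (y :: complex^'n)"
proof -
  have "norm (\<Sum>i\<in>UNIV. x $ i * y $ i) \<le> (\<Sum>i\<in>UNIV. \<bar>norm (x $ i)\<bar> * \<bar>norm (y $ i)\<bar>)"
    by (rule order_trans[OF norm_sum]) (simp add: norm_mult)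
  also have "\<dots> \<le> norm x * norm y"
    unfolding norm_vec_def by (rule L2_set_mult_ineq)
  finally show ?thesis .
qed

lemma norm_vec_le_componentwise:
  assumes "\<And>i. norm (x $ i) \<le> b i"
  shows "norm x \<le> L2_set b UNIV"
  unfolding norm_vec_def by (rule L2_set_mono) (use assms in auto)

lemma norm_matrix_vector_mult_le: "norm (M *v v) \<le> norm M * norm (v :: complex^'n)"
proof -
  have "norm ((M *v v) $ i) \<le> norm (M $ i) * norm v" for i
    using norm_sum_mult_le[of "M $ i" v] by (simp add: matrix_vector_mult_def)
  then have "norm (M *v v) \<le> L2_set (\<lambda>i. norm (M $ i) * norm v) UNIV"
    by (rule norm_vec_le_componentwise)
  then show ?thesis
    by (simp add: norm_vec_def[of M] L2_set_left_distrib)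
qed

lemma norm_matrix_sq: "(norm M)\<^sup>2 = (\<Sum>i\<in>UNIV. \<Sum>j\<in>UNIV. (norm (M $ i $ j))\<^sup>2)"
  by (simp add: norm_vec_def L2_set_def sum_nonneg)

lemma norm_transpose: "norm (transpose M) = norm (M :: complex^'n^'m)"
proof -
  have "(norm (transpose M))\<^sup>2 = (norm M)\<^sup>2"
    unfolding norm_matrix_sq transpose_def by (simp add: sum.swap[of _ "UNIV :: 'm set"])
  then show ?thesis
    by (rule power2_eq_imp_eq) simp_all
qed

lemma norm_cadj: "norm (cadj M) = norm (M :: complex^'n^'m)"
proof -
  have "(norm (cadj M))\<^sup>2 = (norm M)\<^sup>2"
    unfolding norm_matrix_sq cadj_def by (simp add: sum.swap[of _ "UNIV :: 'm set"])
  then show ?thesis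
    by (rule power2_eq_imp_eq) simp_all
qed

lemma norm_matrix_mult_le: "norm (M ** N) \<le> norm M * norm (N :: complex^'n^'k)"
proof -
  have "(M ** N) $ i = transpose N *v M $ i" for i
    by (simp add: Finite_Cartesian_Product.vec_eq_iff matrix_matrix_mult_def matrix_vector_mult_def transpose_def mult.commute)
  then have "norm ((M ** N) $ i) \<le> norm (M $ i) * norm N" for i
    using norm_matrix_vector_mult_le[of "transpose N" "M $ i"] by (simp add: norm_transpose mult.commute)
  then have "norm (M ** N) \<le> L2_set (\<lambda>i. norm (M $ i) * norm N) UNIV"
    by (rule norm_vec_le_componentwise)
  then show ?thesis
    by (simp add: norm_vec_def[of M] L2_set_left_distrib)
qed

lemma norm_matrix_le_entries:
  assumes "\<And>i j. norm ((M :: complex^'n^'m) $ i $ j) \<le> b"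
  shows "norm M \<le> real CARD('m) * real CARD('n) * b"
proof -
  have "norm (M $ i) \<le> real CARD('n) * b" for i
    using L2_set_le_sum[of UNIV "\<lambda>j. norm (M $ i $ j)"] sum_mono[of UNIV "\<lambda>j. norm (M $ i $ j)" "\<lambda>_. b"]
    by (simp add: norm_vec_def assms)
  then show ?thesis
    using L2_set_le_sum[of UNIV "\<lambda>i. norm (M $ i)"] sum_mono[of UNIV "\<lambda>i. norm (M $ i)" "\<lambda>_. real CARD('n) * b"]
    by (simp add: norm_vec_def)
qed

lemma cinner_add_left: "cinner (x + y) z = cinner x z + cinner y z"
  by (simp add: cinner_def sum.distrib algebra_simps)

lemma cinner_diff_left: "cinner (x - y) z = cinner x z - cinner y z"
  by (simp add: cinner_def sum_subtractf algebra_simps)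

lemma cinner_diff_right: "cinner z (x - y) = cinner z x - cinner z y"
  by (simp add: cinner_def sum_subtractf algebra_simps)

lemma cinner_scale_left: "cinner (c *s x) z = c * cinner x z"
  by (simp add: cinner_def sum_distrib_left algebra_simps)

lemma cinner_scale_right: "cinner z (c *s x) = cnj c * cinner z x"
  by (simp add: cinner_def sum_distrib_left algebra_simps)

lemma cinner_zero_left [simp]: "cinner 0 z = 0"
  by (simp add: cinner_def)

lemma cinner_zero_right [simp]: "cinner z 0 = 0"
  by (simp add: cinner_def)

lemma cinner_commute: "cinner y x = cnj (cinner x y)"
  by (simp add: cinner_def mult.commute)

lemma cinner_sum_left: "cinner (sum h S) z = (\<Sum>s\<in>S. cinner (h s) z)"
  by (induction S rule: infinite_finite_induct) (auto simp: cinner_add_left)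

lemma cinner_cadj: "cinner (M *v x) y = cinner x (cadj M *v y)"
proof -
  have "cinner (M *v x) y = (\<Sum>i\<in>UNIV. \<Sum>j\<in>UNIV. M $ i $ j * x $ j * cnj (y $ i))"
    by (simp add: cinner_def matrix_vector_mult_def sum_distrib_right)
  also have "\<dots> = (\<Sum>j\<in>UNIV. \<Sum>i\<in>UNIV. M $ i $ j * x $ j * cnj (y $ i))"
    by (rule sum.swap)
  also have "\<dots> = cinner x (cadj M *v y)"
    by (simp add: cinner_def matrix_vector_mult_def cadj_def sum_distrib_left mult_ac)
  finally show ?thesis .
qed

lemma cinner_cadj_left: "cinner (cadj M *v x) y = cinner x (M *v y)"
  using cinner_cadj[of "cadj M" x y] by simp

lemma cinner_self: "cinner x x = complex_of_real ((norm x)\<^sup>2)"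
proof -
  have "(norm x)\<^sup>2 = (\<Sum>i\<in>UNIV. (norm (x $ i))\<^sup>2)"
    by (simp add: norm_vec_def L2_set_def sum_nonneg)
  then have "complex_of_real ((norm x)\<^sup>2) = (\<Sum>i\<in>UNIV. complex_of_real ((norm (x $ i))\<^sup>2))"
    by simp
  also have "\<dots> = cinner x x"
    by (simp only: cinner_def complex_norm_square)
  finally show ?thesis ..
qed

lemma cinner_self_eq_0_iff: "cinner x x = 0 \<longleftrightarrow> x = 0"
  by (simp add: cinner_self)

lemma norm_cinner_le: "norm (cinner x y) \<le> norm x * norm y"
proof -
  have "norm (cinner x y) \<le> (\<Sum>i\<in>UNIV. \<bar>norm (x $ i)\<bar> * \<bar>norm (y $ i)\<bar>)"
    unfolding cinner_def by (rule order_trans[OF norm_sum]) (simp add: norm_mult)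
  also have "\<dots> \<le> norm x * norm y"
    unfolding norm_vec_def by (rule L2_set_mult_ineq)
  finally show ?thesis .
qed

lemma norm_diff_sq_cinner: "(norm (a - b))\<^sup>2 = (norm a)\<^sup>2 + (norm b)\<^sup>2 - 2 * Re (cinner a b)"
proof -
  have "(norm (a - b))\<^sup>2 = Re (cinner (a - b) (a - b))"
    by (simp add: cinner_self)
  also have "\<dots> = Re (cinner a a) + Re (cinner b b) - Re (cinner a b) - Re (cinner b a)"
    by (simp add: cinner_diff_left cinner_diff_right)
  also have "Re (cinner b a) = Re (cinner a b)"
    by (simp add: cinner_commute[of b a])
  finally show ?thesis
    by (simp add: cinner_self)
qed

lemma sums_cinner_left:
  assumes "t sums s"
  shows "(\<lambda>k. cinner (t k) z) sums cinner s z"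
  unfolding cinner_def by (intro sums_sum sums_mult2 sums_vec_nth assms)

lemma sums_cinner_right:
  assumes "t sums s"
  shows "(\<lambda>k. cinner z (t k)) sums cinner z s"
  using sums_cnj[THEN iffD2, OF sums_cinner_left[OF assms, of z]] by (simp add: cinner_commute[of z])

lemma sums_cinner_matrix:
  assumes "Mk sums Q"
  shows "(\<lambda>k. cinner (Mk k *v x) z) sums cinner (Q *v x) z"
proof -
  have "(\<lambda>k. \<Sum>i\<in>UNIV. \<Sum>j\<in>UNIV. Mk k $ i $ j * x $ j * cnj (z $ i))
        sums (\<Sum>i\<in>UNIV. \<Sum>j\<in>UNIV. Q $ i $ j * x $ j * cnj (z $ i))"
    by (intro sums_sum sums_mult2 sums_vec_nth assms)
  then show ?thesis
    by (simp add: cinner_def matrix_vector_mult_def sum_distrib_right)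
qed

section \<open>Exponential decay of the powers of a stable matrix\<close>

definition cart_index :: "nat \<Rightarrow> 'n::finite" where
  "cart_index = (SOME h. bij_betw h {0..<CARD('n)} UNIV)"

lemma bij_cart_index: "bij_betw (cart_index :: nat \<Rightarrow> 'n::finite) {0..<CARD('n)} UNIV"
proof -
  obtain h :: "nat \<Rightarrow> 'n" where "bij_betw h {0..<CARD('n)} UNIV"
    using ex_bij_betw_nat_finite[of "UNIV :: 'n set"] by auto
  then show ?thesis
    unfolding cart_index_def by (metis someI)
qed

lemma cart_index_surj: obtains i where "i < CARD('n)" "cart_index i = (l :: 'n::finite)"
proof -
  have "l \<in> cart_index ` {0..<CARD('n)}"
    using bij_cart_index[where 'n='n] by (simp add: bij_betw_def)
  then show ?thesis
    using that by auto
qed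

lemma sum_cart_index: "(\<Sum>k\<in>{0..<CARD('n)}. f (cart_index k)) = (\<Sum>l\<in>UNIV. f (l :: 'n::finite))"
  using sum.reindex_bij_betw[OF bij_cart_index, of f] .

definition jnf_of :: "complex^'n::finite^'n \<Rightarrow> complex Matrix.mat" where
  "jnf_of M = Matrix.mat CARD('n) CARD('n) (\<lambda>(i, j). M $ cart_index i $ cart_index j)"

definition jnf_vec :: "complex^'n::finite \<Rightarrow> complex Matrix.vec" where
  "jnf_vec v = Matrix.vec CARD('n) (\<lambda>i. v $ cart_index i)"

lemma dim_jnf_of [simp]:
  "dim_row (jnf_of (M :: complex^'n::finite^'n)) = CARD('n)"
  "dim_col (jnf_of (M :: complex^'n::finite^'n)) = CARD('n)"
  by (simp_all add: jnf_of_def)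

lemma jnf_of_carrier: "jnf_of (M :: complex^'n::finite^'n) \<in> carrier_mat CARD('n) CARD('n)"
  by (simp add: jnf_of_def)

lemma jnf_of_mult: "jnf_of (M ** P) = jnf_of M * jnf_of P"
proof (rule eq_matI)
  fix i j assume "i < dim_row (jnf_of M * jnf_of P)" "j < dim_col (jnf_of M * jnf_of P)"
  then show "jnf_of (M ** P) $$ (i, j) = (jnf_of M * jnf_of P) $$ (i, j)"
    using sum_cart_index[of "\<lambda>l. M $ cart_index i $ l * P $ l $ cart_index j"]
    by (simp add: jnf_of_def scalar_prod_def matrix_matrix_mult_def)
qed simp_all

lemma jnf_of_index [simp]:
  "i < CARD('n) \<Longrightarrow> j < CARD('n) \<Longrightarrow>
    jnf_of (M :: complex^'n::finite^'n) $$ (i, j) = M $ cart_index i $ cart_index j"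
  by (simp add: jnf_of_def)

lemma cart_index_eq_iff:
  "i < CARD('n) \<Longrightarrow> j < CARD('n) \<Longrightarrow> (cart_index i :: 'n::finite) = cart_index j \<longleftrightarrow> i = j"
  using bij_cart_index[where 'n='n] by (auto simp: bij_betw_def inj_on_def)

lemma jnf_of_one: "jnf_of (mat 1 :: complex^'n::finite^'n) = 1\<^sub>m CARD('n)"
  by (rule eq_matI) (auto simp: Finite_Cartesian_Product.mat_def cart_index_eq_iff)

lemma jnf_of_mpow: "jnf_of (mpow A k) = jnf_of A ^\<^sub>m k"
  by (induction k) (simp_all add: jnf_of_one mpow_Suc_right jnf_of_mult)

lemma jnf_of_mult_vec: "jnf_of M *\<^sub>v jnf_vec v = jnf_vec (M *v v)"
proof (rule eq_vecI)
  fix i assume "i < dim_vec (jnf_vec (M *v v))"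
  then show "vec_index (jnf_of M *\<^sub>v jnf_vec v) i = vec_index (jnf_vec (M *v v)) i"
    using sum_cart_index[of "\<lambda>l. M $ cart_index i $ l * v $ l"]
    by (simp add: jnf_of_def jnf_vec_def scalar_prod_def matrix_vector_mult_def)
qed (simp add: jnf_vec_def)

lemma jnf_vec_scale: "jnf_vec (c *s v) = c \<cdot>\<^sub>v jnf_vec v"
  by (rule eq_vecI) (auto simp: jnf_vec_def)

lemma jnf_vec_index [simp]:
  "i < CARD('n) \<Longrightarrow> vec_index (jnf_vec (v :: complex^'n::finite)) i = v $ cart_index i"
  "dim_vec (jnf_vec (v :: complex^'n::finite)) = CARD('n)"
  by (simp_all add: jnf_vec_def)

lemma jnf_vec_inject: "jnf_vec v = jnf_vec w \<longleftrightarrow> v = (w :: complex^'n::finite)"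
proof
  assume eq: "jnf_vec v = jnf_vec w"
  show "v = w"
  proof (rule Finite_Cartesian_Product.vec_eq_iff[THEN iffD2], rule allI)
    fix l :: 'n
    obtain i where "i < CARD('n)" "cart_index i = l"
      by (rule cart_index_surj)
    then show "v $ l = w $ l"
      using arg_cong[OF eq, of "\<lambda>u. vec_index u i"] by simp
  qed
qed simp

lemma jnf_vec_surj:
  assumes "u \<in> carrier_vec CARD('n)"
  obtains v :: "complex^'n::finite" where "u = jnf_vec v"
proof
  define pos where "pos = inv_into {0..<CARD('n)} (cart_index :: nat \<Rightarrow> 'n)"
  have "pos (cart_index i) = i" if "i < CARD('n)" for i
    using bij_cart_index[where 'n='n] that by (auto simp: pos_def bij_betw_def)
  then show "u = jnf_vec (\<chi> l. vec_index u (pos l))"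
    using assms by (intro eq_vecI) (auto simp: jnf_vec_def)
qed

lemma jnf_vec_zero: "jnf_vec (0 :: complex^'n::finite) = 0\<^sub>v CARD('n)"
  by (rule eq_vecI) simp_all

lemma eigenvalue_jnf_of_iff:
  fixes M :: "complex^'n::finite^'n"
  shows "eigenvalue (jnf_of M) e \<longleftrightarrow> (\<exists>v. v \<noteq> 0 \<and> M *v v = e *s v)"
proof
  assume "eigenvalue (jnf_of M) e"
  then obtain u where u: "u \<in> carrier_vec CARD('n)" "u \<noteq> 0\<^sub>v CARD('n)" "jnf_of M *\<^sub>v u = e \<cdot>\<^sub>v u"
    by (auto simp: eigenvalue_def eigenvector_def)
  obtain v :: "complex^'n" where v: "u = jnf_vec v"
    using jnf_vec_surj[OF u(1)] by blast
  have "v \<noteq> 0"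
    using u(2) v by (auto simp: jnf_vec_zero)
  moreover have "M *v v = e *s v"
    using u(3) v by (simp add: jnf_of_mult_vec jnf_vec_inject flip: jnf_vec_scale)
  ultimately show "\<exists>v. v \<noteq> 0 \<and> M *v v = e *s v"
    by blast
next
  assume "\<exists>v. v \<noteq> 0 \<and> M *v v = e *s v"
  then obtain v where v: "v \<noteq> 0" "M *v v = e *s v"
    by metis
  have "jnf_vec v \<in> carrier_vec CARD('n)"
    by (simp add: jnf_vec_def)
  moreover have "jnf_vec v \<noteq> 0\<^sub>v CARD('n)"
    using v(1) by (metis jnf_vec_inject jnf_vec_zero)
  moreover have "jnf_of M *\<^sub>v jnf_vec v = e \<cdot>\<^sub>v jnf_vec v"
    using v(2) by (simp add: jnf_of_mult_vec jnf_vec_scale)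
  ultimately show "eigenvalue (jnf_of M) e"
    unfolding eigenvalue_def eigenvector_def dim_jnf_of by blast
qed

lemma stable_iff_jnf: "stable A \<longleftrightarrow> (\<forall>e. eigenvalue (jnf_of A) e \<longrightarrow> norm e < 1)"
  unfolding stable_def eigenvalue_jnf_of_iff by blast

lemma spectral_radius_jnf_of_attained:
  obtains e where "eigenvalue (jnf_of (A :: complex^'n::finite^'n)) e" "spectral_radius (jnf_of A) = norm e"
  using spectral_radius_mem_max(1)[OF jnf_of_carrier[of A] zero_less_card_finite]
  unfolding spectrum_def by blast

lemma eigenvalue_norm_le_spectral_radius:
  assumes "v \<noteq> 0" "A *v v = \<mu> *s v"
  shows "norm \<mu> \<le> spectral_radius (jnf_of A)"
proof (rule spectral_radius_mem_max(2)[OF jnf_of_carrier zero_less_card_finite])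
  have "eigenvalue (jnf_of A) \<mu>"
    using assms eigenvalue_jnf_of_iff by blast
  then show "norm \<mu> \<in> norm ` spectrum (jnf_of A)"
    by (simp add: spectrum_def)
qed

lemma stable_spectral_radius_less_1:
  assumes "stable A"
  shows "spectral_radius (jnf_of A) < 1"
proof -
  obtain e where e: "eigenvalue (jnf_of A) e" and r: "spectral_radius (jnf_of A) = norm e"
    by (rule spectral_radius_jnf_of_attained)
  have "norm e < 1"
    using assms e unfolding stable_iff_jnf by blast
  then show ?thesis
    unfolding r .
qed

lemma stable_powers_bounded:
  assumes "stable (A :: complex^'n::finite^'n)"
  shows "\<exists>c. \<forall>k. norm (mpow A k) \<le> c"
proof -
  obtain c where c: "\<forall>k. norm_bound (jnf_of A ^\<^sub>m k) c"
    using spectral_radius_jnf_norm_bound_less_1_upper_triangular[OF jnf_of_carrier[of A]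
        stable_spectral_radius_less_1[OF assms]]
    by (rule exE)
  have "norm (mpow A k $ i $ j) \<le> c" for k i j
  proof -
    obtain i' where i': "i' < CARD('n)" "cart_index i' = i"
      by (rule cart_index_surj)
    obtain j' where j': "j' < CARD('n)" "cart_index j' = j"
      by (rule cart_index_surj)
    have "norm_bound (jnf_of (mpow A k)) c"
      unfolding jnf_of_mpow by (rule c[rule_format])
    from this[unfolded norm_bound_def, rule_format, of i' j'] i' j' show ?thesis
      by simp
  qed
  then have "norm (mpow A k) \<le> real CARD('n) * real CARD('n) * c" for k
    by (rule norm_matrix_le_entries)
  then show ?thesis
    by blast
qed

text \<open>Rescaling by the midpoint between the spectral radius and 1 leaves a stable matrix,
  whose powers are bounded.\<close>

lemma stable_rescale:
  assumes "stable A"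
  shows "\<exists>\<rho>. 0 < \<rho> \<and> \<rho> < 1 \<and> stable ((1 / \<rho>) *\<^sub>R A)"
proof -
  define s where "s = spectral_radius (jnf_of A)"
  define \<rho> where "\<rho> = (1 + s) / 2"
  obtain e0 :: complex where "s = norm e0"
    unfolding s_def using spectral_radius_jnf_of_attained by blast
  then have "s < 1" "0 \<le> s"
    using stable_spectral_radius_less_1[OF assms] by (simp_all add: s_def)
  then have \<rho>: "0 < \<rho>" "\<rho> < 1" "s < \<rho>"
    by (auto simp: \<rho>_def)
  have "stable ((1 / \<rho>) *\<^sub>R A)"
    unfolding stable_def
  proof (intro allI impI)
    fix e v assume ev: "v \<noteq> 0 \<and> (1 / \<rho>) *\<^sub>R A *v v = e *s v"
    have "A *v v = \<rho> *\<^sub>R ((1 / \<rho>) *\<^sub>R A *v v)"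
      using \<rho> by (simp add: scaleR_matrix_vector_mult)
    also have "\<dots> = \<rho> *\<^sub>R (e *s v)"
      using ev by simp
    also have "\<dots> = (complex_of_real \<rho> * e) *s v"
      by (simp add: scaleR_eq_of_real_scale)
    finally have "A *v v = (complex_of_real \<rho> * e) *s v" .
    then have "norm (complex_of_real \<rho> * e) \<le> s"
      unfolding s_def using ev by (intro eigenvalue_norm_le_spectral_radius) auto
    then have "\<rho> * norm e \<le> s"
      using \<rho> by (simp add: norm_mult)
    then have "\<rho> * norm e < \<rho>"
      using \<rho> by linarith
    then show "norm e < 1"
      using \<rho> by (simp add: mult_less_cancel_left2)
  qed
  then show ?thesis
    using \<rho> by (intro exI[of _ \<rho>]) simp
qed

lemma stable_mpow_decay:
  assumes "stable A"
  shows "\<exists>K \<rho>. 0 < \<rho> \<and> \<rho> < 1 \<and> (\<forall>k. norm (mpow A k) \<le> K * \<rho> ^ k)"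
proof -
  obtain \<rho> where \<rho>: "0 < \<rho>" "\<rho> < 1" and stable_B: "stable ((1 / \<rho>) *\<^sub>R A)"
    using stable_rescale[OF assms] by blast
  define B where "B = (1 / \<rho>) *\<^sub>R A"
  obtain K where K: "\<forall>k. norm (mpow B k) \<le> K"
    using stable_powers_bounded[OF stable_B] unfolding B_def by (rule exE)
  have A: "A = \<rho> *\<^sub>R B"
    using \<rho> by (simp add: B_def)
  have "norm (mpow A k) \<le> K * \<rho> ^ k" for k
    using K \<rho> by (simp add: A mpow_scaleR mult.commute mult_left_mono)
  then show ?thesis
    using \<rho> by (intro exI[of _ K] exI[of _ \<rho>]) simp
qed

section \<open>Exponential decay of the Taylor coefficients of a rational \<open>H\<^sup>\<infinity>\<close> function\<close>

lemma poly_nonzero_on_larger_disc: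
  fixes q :: "complex poly"
  assumes "\<And>z. norm z \<le> 1 \<Longrightarrow> poly q z \<noteq> 0"
  obtains r where "1 < r" "\<And>z. norm z \<le> r \<Longrightarrow> poly q z \<noteq> 0"
proof -
  have "q \<noteq> 0"
    using assms[of 0] by auto
  then have fin: "finite (norm ` {z. poly q z = 0})"
    by (simp add: poly_roots_finite)
  define r where "r = Min (insert 2 (norm ` {z. poly q z = 0}))"
  have "1 < r"
    using fin assms by (force simp: r_def not_le)
  moreover have "poly q z \<noteq> 0" if "norm z < r" for z
    using fin that by (auto simp: r_def)
  ultimately show ?thesis
    using that[of "(1 + r) / 2"] by fastforce
qed

text \<open>Cauchy's estimate for the Taylor coefficients on a circle of radius \<open>r\<close>.\<close>

lemma Taylor_coefficients_geometric_bound: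
  fixes f :: "complex \<Rightarrow> complex"
  assumes "f holomorphic_on U" "open U" "cball 0 r \<subseteq> U" "0 < r"
  shows "\<exists>B. \<forall>k. norm ((deriv ^^ k) f 0 / fact k) \<le> B * (1 / r) ^ k"
proof -
  have cont: "continuous_on (cball 0 r) f"
    using assms holomorphic_on_imp_continuous_on continuous_on_subset by blast
  have "bounded (f ` cball 0 r)"
    using compact_imp_bounded[OF compact_continuous_image[OF cont compact_cball]] .
  then obtain B where B: "\<And>z. z \<in> cball 0 r \<Longrightarrow> norm (f z) \<le> B"
    unfolding bounded_iff by blast
  have "norm ((deriv ^^ k) f 0) \<le> fact k * B / r ^ k" for k
    using assms B ball_subset_cball
    by (intro Cauchy_inequality[OF holomorphic_on_subset[OF assms(1)] cont]) (auto simp: norm_minus_commute)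
  then have "norm ((deriv ^^ k) f 0 / fact k) \<le> B * (1 / r) ^ k" for k
    by (simp add: norm_divide divide_le_eq power_one_over mult.commute)
  then show ?thesis
    by blast
qed

lemma rat_Hinf_taylor_decay:
  assumes "rat_Hinf (\<Phi> :: complex \<Rightarrow> complex^'m^'r)"
  shows "\<exists>L \<sigma>. 0 < \<sigma> \<and> \<sigma> < 1 \<and> (\<forall>k. norm (taylor_coeff \<Phi> k) \<le> L * \<sigma> ^ k)"
proof -
  obtain P :: "complex poly^'m^'r" and q where
    q: "\<And>z. norm z \<le> 1 \<Longrightarrow> poly q z \<noteq> 0" and
    PQ: "\<And>z. poly q z \<noteq> 0 \<Longrightarrow> \<Phi> z = (\<chi> i j. poly (P $ i $ j) z / poly q z)"
    using assms unfolding rat_Hinf_def by blast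
  obtain r where r: "1 < r" "\<And>z. norm z \<le> r \<Longrightarrow> poly q z \<noteq> 0"
    using poly_nonzero_on_larger_disc[OF q] by blast
  have "\<exists>B. \<forall>k. norm (taylor_coeff \<Phi> k $ i $ j) \<le> B * (1 / r) ^ k" for i j
  proof -
    have "(\<lambda>w. poly (P $ i $ j) w / poly q w) holomorphic_on {z. poly q z \<noteq> 0}"
      by (intro holomorphic_intros) auto
    then have "(\<lambda>w. \<Phi> w $ i $ j) holomorphic_on {z. poly q z \<noteq> 0}"
      by (rule holomorphic_transform) (simp add: PQ)
    moreover have "open {z. poly q z \<noteq> 0}"
      by (intro open_Collect_neq continuous_intros)
    moreover have "cball 0 r \<subseteq> {z. poly q z \<noteq> 0}"
      using r(2) by auto
    ultimately have "\<exists>B. \<forall>k. norm ((deriv ^^ k) (\<lambda>w. \<Phi> w $ i $ j) 0 / fact k) \<le> B * (1 / r) ^ k"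
      by (rule Taylor_coefficients_geometric_bound) (use r(1) in simp)
    then show ?thesis
      by (simp add: taylor_coeff_def)
  qed
  then obtain B where B: "\<And>i j k. norm (taylor_coeff \<Phi> k $ i $ j) \<le> B i j * (1 / r) ^ k"
    by metis
  define S where "S = (\<Sum>i\<in>UNIV. \<Sum>j\<in>UNIV. \<bar>B i j\<bar>)"
  have BS: "B i j \<le> S" for i j
  proof -
    have "\<bar>B i j\<bar> \<le> (\<Sum>j\<in>UNIV. \<bar>B i j\<bar>)"
      by (rule member_le_sum) auto
    also have "\<dots> \<le> S"
      unfolding S_def by (rule member_le_sum) (auto intro: sum_nonneg)
    finally show ?thesis
      by linarith
  qed
  have "norm (taylor_coeff \<Phi> k $ i $ j) \<le> S * (1 / r) ^ k" for k i j
    using order_trans[OF B mult_right_mono[OF BS]] r(1) by simp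
  then have "norm (taylor_coeff \<Phi> k) \<le> (real CARD('r) * real CARD('m) * S) * (1 / r) ^ k" for k
    using norm_matrix_le_entries[of "taylor_coeff \<Phi> k"] by (simp add: mult.assoc)
  then show ?thesis
    using r(1) by (intro exI[of _ "real CARD('r) * real CARD('m) * S"] exI[of _ "1 / r"]) simp
qed

section \<open>The sequence space \<open>\<ell>\<^sup>2\<close>\<close>

lemma l2_zero: "(\<lambda>_. 0) \<in> l2"
  by (simp add: l2_def)

lemma l2_add:
  assumes "f \<in> l2" "g \<in> l2"
  shows "(\<lambda>j. f j + g j) \<in> l2"
proof -
  have "(norm (f j + g j))\<^sup>2 \<le> 2 * (norm (f j))\<^sup>2 + 2 * (norm (g j))\<^sup>2" for j
  proof -
    have "(norm (f j + g j))\<^sup>2 \<le> (norm (f j) + norm (g j))\<^sup>2"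
      by (simp add: norm_triangle_ineq power_mono)
    also have "\<dots> \<le> 2 * (norm (f j))\<^sup>2 + 2 * (norm (g j))\<^sup>2"
      using sum_squares_bound[of "norm (f j)" "norm (g j)"] by (simp add: power2_sum)
    finally show ?thesis .
  qed
  moreover have "summable (\<lambda>j. 2 * (norm (f j))\<^sup>2 + 2 * (norm (g j))\<^sup>2)"
    using assms by (intro summable_add summable_mult) (auto simp: l2_def)
  ultimately show ?thesis
    unfolding l2_def by (auto intro: summable_comparison_test')
qed

lemma l2_scale:
  assumes "f \<in> l2"
  shows "(\<lambda>j. c *s f j) \<in> l2"
  using summable_mult[of "\<lambda>j. (norm (f j))\<^sup>2" "(norm c)\<^sup>2"] assms
  by (simp add: l2_def norm_vec_scale power_mult_distrib)

lemma l2_diff: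
  assumes "f \<in> l2" "g \<in> l2"
  shows "(\<lambda>j. f j - g j) \<in> l2"
  using l2_add[OF assms(1) l2_scale[OF assms(2), of "-1"]]
  by (simp add: Finite_Cartesian_Product.vec_eq_iff)

lemma l2_bounded:
  assumes "f \<in> l2"
  obtains B where "\<And>j. norm (f j) \<le> B"
proof
  have s: "summable (\<lambda>j. (norm (f j))\<^sup>2)"
    using assms by (simp add: l2_def)
  show "norm (f j) \<le> sqrt (\<Sum>j. (norm (f j))\<^sup>2)" for j
    using sum_le_suminf[OF s, of "{j}"] by (simp add: real_le_rsqrt)
qed

lemma l2inner_summable:
  assumes "f \<in> l2" "g \<in> l2"
  shows "summable (\<lambda>j. cinner (f j) (g j))"
proof (rule summable_comparison_test')
  show "norm (cinner (f j) (g j)) \<le> ((norm (f j))\<^sup>2 + (norm (g j))\<^sup>2) / 2" for j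
    using norm_cinner_le[of "f j" "g j"] sum_squares_bound[of "norm (f j)" "norm (g j)"] by simp
  show "summable (\<lambda>j. ((norm (f j))\<^sup>2 + (norm (g j))\<^sup>2) / 2)"
    using assms by (intro summable_divide summable_add) (auto simp: l2_def)
qed

lemma l2inner_diff_left:
  assumes "f \<in> l2" "g \<in> l2" "h \<in> l2"
  shows "l2inner (\<lambda>j. f j - g j) h = l2inner f h - l2inner g h"
  unfolding l2inner_def cinner_diff_left
  by (rule suminf_diff[OF l2inner_summable[OF assms(1,3)] l2inner_summable[OF assms(2,3)], symmetric])

lemma l2inner_self_eq_0_iff:
  assumes "f \<in> l2"
  shows "l2inner f f = 0 \<longleftrightarrow> f = (\<lambda>_. 0)"
proof -
  have s: "summable (\<lambda>j. (norm (f j))\<^sup>2)"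
    using assms by (simp add: l2_def)
  have "l2inner f f = complex_of_real (\<Sum>j. (norm (f j))\<^sup>2)"
    unfolding l2inner_def cinner_self by (rule suminf_of_real[OF s, symmetric])
  then show ?thesis
    using suminf_eq_zero_iff[OF s] by (auto simp: fun_eq_iff)
qed

lemma l2proj_eqI:
  assumes M: "M \<subseteq> l2" "\<And>g h. g \<in> M \<Longrightarrow> h \<in> M \<Longrightarrow> (\<lambda>j. g j - h j) \<in> M"
    and f: "f \<in> l2" and g: "g \<in> M" and orth: "\<And>h. h \<in> M \<Longrightarrow> l2inner (\<lambda>j. f j - g j) h = 0"
  shows "l2proj M f = g"
  unfolding l2proj_def
proof (rule the_equality)
  show "g \<in> M \<and> (\<forall>h\<in>M. l2inner (\<lambda>j. f j - g j) h = 0)"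
    using g orth by blast
  fix g' assume g': "g' \<in> M \<and> (\<forall>h\<in>M. l2inner (\<lambda>j. f j - g' j) h = 0)"
  define d where "d = (\<lambda>j. g' j - g j)"
  have d: "d \<in> M" "d \<in> l2"
    using M g g' by (auto simp: d_def)
  have gl: "g \<in> l2" "g' \<in> l2"
    using M g g' by auto
  have "l2inner (\<lambda>j. (f j - g j) - (f j - g' j)) d = l2inner (\<lambda>j. f j - g j) d - l2inner (\<lambda>j. f j - g' j) d"
    by (rule l2inner_diff_left[OF l2_diff[OF f gl(1)] l2_diff[OF f gl(2)] d(2)])
  moreover have "(\<lambda>j. (f j - g j) - (f j - g' j)) = d"
    by (simp add: d_def)
  ultimately have "l2inner d d = l2inner (\<lambda>j. f j - g j) d - l2inner (\<lambda>j. f j - g' j) d"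
    by simp
  also have "\<dots> = 0"
    using orth[OF d(1)] g' d(1) by simp
  finally show "g' = g"
    using l2inner_self_eq_0_iff[OF d(2)] by (simp add: d_def fun_eq_iff)
qed

section \<open>Rearranging absolutely summable double series\<close>

lemma summable_on_suminf:
  fixes f :: "nat \<Rightarrow> 'a::banach"
  assumes "f summable_on UNIV"
  shows "suminf f = infsum f UNIV"
  using has_sum_imp_sums[OF has_sum_infsum[OF assms]] by (simp add: sums_iff)

lemma summable_on_Cauchy_product_diagonals:
  fixes b :: "nat \<times> nat \<Rightarrow> 'a::banach"
  assumes "b summable_on UNIV"
  shows "(\<lambda>i. \<Sum>j\<le>i. b (j, i - j)) summable_on UNIV"
    and "infsum (\<lambda>i. \<Sum>j\<le>i. b (j, i - j)) UNIV = infsum b UNIV"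
proof -
  define S where "S = Sigma (UNIV :: nat set) (\<lambda>i. {..i})"
  define g where "g = (\<lambda>(i :: nat, j :: nat). (j, i - j))"
  have bij: "bij_betw g S UNIV"
    by (rule bij_betw_byWitness[where f'="\<lambda>(j, k). (j + k, j)"]) (auto simp: S_def g_def image_def)
  have "(\<lambda>x. b (g x)) summable_on S"
    using assms summable_on_reindex_bij_betw[OF bij] by blast
  then have s: "(\<lambda>(i, j). b (j, i - j)) summable_on Sigma UNIV (\<lambda>i. {..i})"
    unfolding S_def g_def by (simp add: case_prod_unfold)
  from summable_on_Sigma_banach[OF s]
  show "(\<lambda>i. \<Sum>j\<le>i. b (j, i - j)) summable_on UNIV"
    by simp
  have "infsum (\<lambda>i. \<Sum>j\<le>i. b (j, i - j)) UNIV = (\<Sum>\<^sub>\<infinity>(i, j)\<in>Sigma UNIV (\<lambda>i. {..i}). b (j, i - j))"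
    using infsum_Sigma'_banach[OF s] by simp
  also have "\<dots> = (\<Sum>\<^sub>\<infinity>x\<in>S. b (g x))"
    unfolding S_def g_def by (simp add: case_prod_unfold)
  also have "\<dots> = infsum b UNIV"
    by (rule infsum_reindex_bij_betw[OF bij])
  finally show "infsum (\<lambda>i. \<Sum>j\<le>i. b (j, i - j)) UNIV = infsum b UNIV" .
qed

lemma summable_on_rows:
  fixes b :: "nat \<times> nat \<Rightarrow> complex"
  assumes "b summable_on UNIV"
  shows "(\<lambda>k. b (j, k)) summable_on UNIV"
    and "(\<lambda>j. infsum (\<lambda>k. b (j, k)) UNIV) summable_on UNIV"
    and "infsum (\<lambda>j. infsum (\<lambda>k. b (j, k)) UNIV) UNIV = infsum b UNIV"
proof -
  have s: "(\<lambda>(x, y). b (x, y)) summable_on Sigma UNIV (\<lambda>_. UNIV)"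
    using assms by (simp add: case_prod_unfold)
  show "(\<lambda>k. b (j, k)) summable_on UNIV"
    using summable_on_SigmaD1[where f="\<lambda>x y. b (x, y)", OF s, of j] by simp
  show "(\<lambda>j. infsum (\<lambda>k. b (j, k)) UNIV) summable_on UNIV"
    using summable_on_Sigma_banach[where f="\<lambda>x y. b (x, y)", OF s] by simp
  show "infsum (\<lambda>j. infsum (\<lambda>k. b (j, k)) UNIV) UNIV = infsum b UNIV"
    using infsum_Sigma'_banach[where f="\<lambda>x y. b (x, y)", OF s] by (simp add: case_prod_unfold)
qed

lemma nonneg_summable_on_squares:
  fixes d :: "nat \<times> nat \<Rightarrow> real"
  assumes "\<And>x. 0 \<le> d x" and "\<And>N. (\<Sum>j\<le>N. \<Sum>k\<le>N. d (j, k)) \<le> C"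
  shows "d summable_on UNIV"
proof (rule nonneg_bdd_above_summable_on)
  show "bdd_above (sum d ` {F. F \<subseteq> UNIV \<and> finite F})"
  proof (rule bdd_aboveI)
    fix s assume "s \<in> sum d ` {F. F \<subseteq> UNIV \<and> finite F}"
    then obtain F where F: "finite F" "s = sum d F"
      by auto
    define N where "N = Max (insert 0 (fst ` F \<union> snd ` F))"
    have "F \<subseteq> {..N} \<times> {..N}"
      using F(1) by (force simp: N_def intro: Max_ge)
    then have "sum d F \<le> sum d ({..N} \<times> {..N})"
      by (intro sum_mono2) (auto simp: assms(1))
    also have "\<dots> \<le> C"
      using assms(2)[of N] by (simp add: sum.cartesian_product)
    finally show "s \<le> C"
      using F by simp
  qed
qed (use assms in auto)

section \<open>The observability operator\<close>

lemma Wobs_add: "Wobs C A (x + y) = (\<lambda>j. Wobs C A x j + Wobs C A y j)"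
  by (simp add: Wobs_def matrix_vector_right_distrib)

lemma Wobs_diff: "Wobs C A (x - y) = (\<lambda>j. Wobs C A x j - Wobs C A y j)"
  by (simp add: Wobs_def matrix_vector_mult_diff_distrib)

lemma Wobs_scale: "Wobs C A (c *s x) = (\<lambda>j. c *s Wobs C A x j)"
  by (simp add: Wobs_def vector_scalar_commute)

lemma Wobs_zero: "Wobs C A 0 = (\<lambda>_. 0)"
  by (simp add: Wobs_def)

locale decaying_powers =
  fixes A :: "complex^'n^'n" and K \<rho> :: real
  assumes rate: "0 < \<rho>" "\<rho> < 1"
    and norm_mpow_le: "\<And>k. norm (mpow A k) \<le> K * \<rho> ^ k"
begin

lemma K_nonneg: "0 \<le> K"
  using order_trans[OF norm_ge_zero norm_mpow_le[of 0]] by simp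

lemma norm_Wobs_le: "norm (Wobs C A x k) \<le> norm C * K * \<rho> ^ k * norm x"
proof -
  have "norm (Wobs C A x k) \<le> norm C * norm (mpow A k *v x)"
    unfolding Wobs_def by (rule norm_matrix_vector_mult_le)
  also have "\<dots> \<le> norm C * (norm (mpow A k) * norm x)"
    by (intro mult_left_mono norm_matrix_vector_mult_le) simp
  also have "\<dots> \<le> norm C * (K * \<rho> ^ k * norm x)"
    by (intro mult_left_mono mult_right_mono norm_mpow_le) simp_all
  finally show ?thesis
    by (simp add: mult_ac)
qed

lemma norm_Wobs_adj_term_le: "norm (cadj (mpow A k) *v (cadj C *v v)) \<le> norm C * K * \<rho> ^ k * norm v"
proof -
  have "norm (cadj (mpow A k) *v (cadj C *v v)) \<le> norm (mpow A k) * norm (cadj C *v v)"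
    using norm_matrix_vector_mult_le[of "cadj (mpow A k)"] by (simp add: norm_cadj)
  also have "\<dots> \<le> norm (mpow A k) * (norm C * norm v)"
    using norm_matrix_vector_mult_le[of "cadj C" v] by (intro mult_left_mono) (simp_all add: norm_cadj)
  also have "\<dots> \<le> K * \<rho> ^ k * (norm C * norm v)"
    by (intro mult_right_mono norm_mpow_le) simp
  finally show ?thesis
    by (simp add: mult_ac)
qed

lemma summable_geometric_sq: "summable (\<lambda>k. c * (\<rho>\<^sup>2) ^ k)"
  using rate by (intro summable_mult summable_geometric) (simp add: abs_less_iff power_less_one_iff)

lemma Wobs_in_l2: "Wobs C A x \<in> l2"
  unfolding l2_def mem_Collect_eq
proof (rule summable_comparison_test'[OF summable_geometric_sq])
  fix k
  have "(norm (Wobs C A x k))\<^sup>2 \<le> (norm C * K * \<rho> ^ k * norm x)\<^sup>2"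
    by (rule power_mono[OF norm_Wobs_le]) simp
  then show "norm ((norm (Wobs C A x k))\<^sup>2) \<le> (norm C * K * norm x)\<^sup>2 * (\<rho>\<^sup>2) ^ k"
    by (simp add: power_mult_distrib power_mult[symmetric] mult_ac)
qed

lemma summable_Wobs_adj:
  assumes "f \<in> l2"
  shows "summable (\<lambda>j. cadj (mpow A j) *v (cadj C *v f j))"
proof -
  obtain B where B: "\<And>j. norm (f j) \<le> B"
    using l2_bounded[OF assms] by blast
  show ?thesis
  proof (rule summable_comparison_test')
    fix j
    have "norm (cadj (mpow A j) *v (cadj C *v f j)) \<le> norm C * K * \<rho> ^ j * norm (f j)"
      by (rule norm_Wobs_adj_term_le)
    also have "\<dots> \<le> norm C * K * \<rho> ^ j * B"
      using K_nonneg rate by (intro mult_left_mono B) simp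
    finally show "norm (cadj (mpow A j) *v (cadj C *v f j)) \<le> (norm C * K * B) * \<rho> ^ j"
      by (simp add: mult_ac)
  next
    show "summable (\<lambda>j. (norm C * K * B) * \<rho> ^ j)"
      using rate by (intro summable_mult summable_geometric) simp
  qed
qed

lemma cinner_Wobs_adj:
  assumes "f \<in> l2"
  shows "cinner (Wobs_adj C A f) z = l2inner f (Wobs C A z)"
proof -
  have "(\<lambda>j. cadj (mpow A j) *v (cadj C *v f j)) sums Wobs_adj C A f"
    unfolding Wobs_adj_def by (rule summable_sums[OF summable_Wobs_adj[OF assms]])
  from sums_cinner_left[OF this, of z]
  show ?thesis
    by (simp add: l2inner_def sums_iff cinner_cadj_left Wobs_def)
qed

lemma l2inner_Wobs: "l2inner (Wobs C A x) (Wobs C A z) = cinner (obs_gramian C A *v x) z"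
proof -
  define G where "G k = cadj (mpow A k) ** cadj C ** C ** mpow A k" for k
  have "norm (G k) \<le> (norm C * K)\<^sup>2 * (\<rho>\<^sup>2) ^ k" for k
  proof -
    have "norm (G k) \<le> norm (cadj (mpow A k) ** cadj C ** C) * norm (mpow A k)"
      unfolding G_def by (rule norm_matrix_mult_le)
    also have "\<dots> \<le> norm (mpow A k) * norm C * norm C * norm (mpow A k)"
    proof (rule mult_right_mono)
      have "norm (cadj (mpow A k) ** cadj C ** C) \<le> norm (cadj (mpow A k) ** cadj C) * norm C"
        by (rule norm_matrix_mult_le)
      also have "\<dots> \<le> norm (mpow A k) * norm C * norm C"
        using norm_matrix_mult_le[of "cadj (mpow A k)" "cadj C"]
        by (intro mult_right_mono) (simp_all add: norm_cadj)
      finally show "norm (cadj (mpow A k) ** cadj C ** C) \<le> norm (mpow A k) * norm C * norm C" .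
    qed simp
    also have "\<dots> = (norm C * norm (mpow A k))\<^sup>2"
      by (simp add: power2_eq_square mult_ac)
    also have "\<dots> \<le> (norm C * (K * \<rho> ^ k))\<^sup>2"
      by (intro power_mono mult_left_mono norm_mpow_le) simp_all
    finally show ?thesis
      by (simp add: power_mult_distrib power_mult[symmetric] mult_ac)
  qed
  then have "summable G"
    by (intro summable_comparison_test'[OF summable_geometric_sq[of "(norm C * K)\<^sup>2"]]) simp
  then have "G sums obs_gramian C A"
    using summable_sums by (simp add: obs_gramian_def flip: G_def)
  from sums_cinner_matrix[OF this, of x z]
  show ?thesis
    by (simp add: G_def l2inner_def sums_iff cinner_cadj_left Wobs_def matrix_vector_mul_assoc[symmetric])
qed

end

section \<open>Toeplitz operators with an exponentially decaying symbol\<close>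

lemma geometric_partial_sum_le:
  fixes \<sigma> :: real
  assumes "0 \<le> \<sigma>" "\<sigma> < 1"
  shows "(\<Sum>k\<le>N. \<sigma> ^ k) \<le> 1 / (1 - \<sigma>)"
  using sum_le_suminf[OF summable_geometric[of \<sigma>], of "{..N}"] assms by (simp add: suminf_geometric)

lemma geometric_partial_sum_rev_le:
  fixes \<sigma> :: real
  assumes "0 \<le> \<sigma>" "\<sigma> < 1"
  shows "(\<Sum>j\<le>i. \<sigma> ^ (i - j)) \<le> 1 / (1 - \<sigma>)"
proof -
  have "(\<Sum>j\<le>i. \<sigma> ^ (i - j)) = (\<Sum>k\<le>i. \<sigma> ^ k)"
    by (rule sum.reindex_bij_witness[where i="\<lambda>k. i - k" and j="\<lambda>j. i - j"]) auto
  then show ?thesis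
    using geometric_partial_sum_le[OF assms] by simp
qed

locale decaying_symbol =
  fixes \<Phi> :: "complex \<Rightarrow> complex^'m^'r" and L \<sigma> :: real
  assumes rate: "0 < \<sigma>" "\<sigma> < 1"
    and norm_taylor_coeff_le: "\<And>k. norm (taylor_coeff \<Phi> k) \<le> L * \<sigma> ^ k"
begin

lemma L_nonneg: "0 \<le> L"
  using order_trans[OF norm_ge_zero norm_taylor_coeff_le[of 0]] by simp

lemma norm_taylor_coeff_mult_le: "norm (taylor_coeff \<Phi> k *v v) \<le> L * \<sigma> ^ k * norm v"
  using order_trans[OF norm_matrix_vector_mult_le mult_right_mono[OF norm_taylor_coeff_le]] by simp

lemma norm_taylor_coeff_adj_mult_le: "norm (cadj (taylor_coeff \<Phi> k) *v v) \<le> L * \<sigma> ^ k * norm v"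
  using norm_matrix_vector_mult_le[of "cadj (taylor_coeff \<Phi> k)" v] norm_taylor_coeff_le[of k]
  by (simp add: norm_cadj order_trans[OF _ mult_right_mono])

lemma summable_toeplitz_adj:
  assumes "g \<in> l2"
  shows "summable (\<lambda>k. cadj (taylor_coeff \<Phi> k) *v g (i + k))"
proof -
  obtain B where B: "\<And>j. norm (g j) \<le> B"
    using l2_bounded[OF assms] by blast
  show ?thesis
  proof (rule summable_comparison_test')
    fix k
    have "norm (cadj (taylor_coeff \<Phi> k) *v g (i + k)) \<le> L * \<sigma> ^ k * norm (g (i + k))"
      by (rule norm_taylor_coeff_adj_mult_le)
    also have "\<dots> \<le> L * \<sigma> ^ k * B"
      using L_nonneg rate by (intro mult_left_mono B) simp
    finally show "norm (cadj (taylor_coeff \<Phi> k) *v g (i + k)) \<le> (L * B) * \<sigma> ^ k"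
      by (simp add: mult_ac)
  next
    show "summable (\<lambda>k. (L * B) * \<sigma> ^ k)"
      using rate by (intro summable_mult summable_geometric) simp
  qed
qed

lemma toeplitz_adj_zero: "toeplitz_adj \<Phi> (\<lambda>_. 0) = (\<lambda>_. 0)"
  by (simp add: toeplitz_adj_def)

lemma toeplitz_adj_add:
  assumes "f \<in> l2" "g \<in> l2"
  shows "toeplitz_adj \<Phi> (\<lambda>j. f j + g j) = (\<lambda>i. toeplitz_adj \<Phi> f i + toeplitz_adj \<Phi> g i)"
  unfolding toeplitz_adj_def
  by (simp add: matrix_vector_right_distrib
      suminf_add[OF summable_toeplitz_adj[OF assms(1)] summable_toeplitz_adj[OF assms(2)]])

lemma toeplitz_adj_diff:
  assumes "f \<in> l2" "g \<in> l2"
  shows "toeplitz_adj \<Phi> (\<lambda>j. f j - g j) = (\<lambda>i. toeplitz_adj \<Phi> f i - toeplitz_adj \<Phi> g i)"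
  unfolding toeplitz_adj_def
  by (simp add: matrix_vector_mult_diff_distrib
      suminf_diff[OF summable_toeplitz_adj[OF assms(1)] summable_toeplitz_adj[OF assms(2)]])

lemma toeplitz_adj_scale:
  assumes "g \<in> l2"
  shows "toeplitz_adj \<Phi> (\<lambda>j. c *s g j) = (\<lambda>i. c *s toeplitz_adj \<Phi> g i)"
proof -
  have "bounded_linear (\<lambda>v :: complex^'m. c *s v)"
    by (rule bounded_linear_intro[where K="norm c"])
      (simp_all add: vector_add_ldistrib scaleR_conv_of_real norm_vec_scale vector_scalar_commute
        Finite_Cartesian_Product.vec_eq_iff)
  from bounded_linear.suminf[OF this summable_toeplitz_adj[OF assms]]
  show ?thesis
    unfolding toeplitz_adj_def by (simp add: vector_scalar_commute)
qed

text \<open>Cauchy--Schwarz with the weights \<open>\<sigma>\<^sup>i\<^sup>-\<^sup>j\<close>.\<close>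

lemma norm_toeplitz_sq_le:
  "(norm (toeplitz \<Phi> f i))\<^sup>2 \<le> L\<^sup>2 / (1 - \<sigma>) * (\<Sum>j\<le>i. \<sigma> ^ (i - j) * (norm (f j))\<^sup>2)"
proof -
  define S where "S = (\<Sum>j\<le>i. sqrt (\<sigma> ^ (i - j)) * (sqrt (\<sigma> ^ (i - j)) * norm (f j)))"
  have "norm (toeplitz \<Phi> f i) \<le> (\<Sum>j\<le>i. L * \<sigma> ^ (i - j) * norm (f j))"
    unfolding toeplitz_def by (rule order_trans[OF norm_sum sum_mono[OF norm_taylor_coeff_mult_le]])
  also have "\<dots> = L * S"
    using rate by (simp add: S_def sum_distrib_left mult_ac flip: real_sqrt_mult)
  finally have T: "(norm (toeplitz \<Phi> f i))\<^sup>2 \<le> L\<^sup>2 * S\<^sup>2"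
    using power_mono[of _ "L * S" 2] by (simp add: power_mult_distrib)
  have "S\<^sup>2 \<le> (\<Sum>j\<le>i. \<sigma> ^ (i - j)) * (\<Sum>j\<le>i. \<sigma> ^ (i - j) * (norm (f j))\<^sup>2)"
    using Cauchy_Schwarz_ineq_sum[of "\<lambda>j. sqrt (\<sigma> ^ (i - j))" "\<lambda>j. sqrt (\<sigma> ^ (i - j)) * norm (f j)" "{..i}"]
      rate by (simp add: S_def power_mult_distrib)
  also have "\<dots> \<le> 1 / (1 - \<sigma>) * (\<Sum>j\<le>i. \<sigma> ^ (i - j) * (norm (f j))\<^sup>2)"
    using rate by (intro mult_right_mono geometric_partial_sum_rev_le sum_nonneg) simp_all
  finally have "L\<^sup>2 * S\<^sup>2 \<le> L\<^sup>2 * (1 / (1 - \<sigma>) * (\<Sum>j\<le>i. \<sigma> ^ (i - j) * (norm (f j))\<^sup>2))"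
    by (rule mult_left_mono) simp
  with T show ?thesis
    by simp
qed

end

context decaying_symbol
begin

lemma toeplitz_in_l2:
  assumes "f \<in> l2"
  shows "toeplitz \<Phi> f \<in> l2"
proof -
  define e where "e = (\<lambda>(j, k). \<sigma> ^ k * (norm (f j))\<^sup>2)"
  have F: "(\<Sum>j\<le>N. (norm (f j))\<^sup>2) \<le> (\<Sum>j. (norm (f j))\<^sup>2)" for N
    using assms by (intro sum_le_suminf) (auto simp: l2_def)
  have F0: "0 \<le> (\<Sum>j. (norm (f j))\<^sup>2)"
    using assms by (intro suminf_nonneg) (auto simp: l2_def)
  have "e summable_on UNIV"
  proof (rule nonneg_summable_on_squares)
    show "0 \<le> e x" for x
      using rate by (auto simp: e_def split: prod.split)
    fix N
    have "(\<Sum>j\<le>N. \<Sum>k\<le>N. e (j, k)) = (\<Sum>j\<le>N. (norm (f j))\<^sup>2) * (\<Sum>k\<le>N. \<sigma> ^ k)"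
      by (simp add: e_def sum_distrib_left sum_distrib_right mult_ac)
    also have "\<dots> \<le> (\<Sum>j. (norm (f j))\<^sup>2) * (1 / (1 - \<sigma>))"
      using rate F0 by (intro mult_mono F geometric_partial_sum_le) (auto intro: sum_nonneg)
    finally show "(\<Sum>j\<le>N. \<Sum>k\<le>N. e (j, k)) \<le> (\<Sum>j. (norm (f j))\<^sup>2) * (1 / (1 - \<sigma>))" .
  qed
  then have diagonals: "summable (\<lambda>i. \<Sum>j\<le>i. e (j, i - j))"
    by (rule summable_on_imp_summable[OF summable_on_Cauchy_product_diagonals(1)])
  have "(norm (toeplitz \<Phi> f i))\<^sup>2 \<le> L\<^sup>2 / (1 - \<sigma>) * (\<Sum>j\<le>i. e (j, i - j))" for i
    unfolding e_def using norm_toeplitz_sq_le[of f i] by simp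
  then show ?thesis
    unfolding l2_def mem_Collect_eq
    by (intro summable_comparison_test'[OF summable_mult[OF diagonals, where c="L\<^sup>2 / (1 - \<sigma>)"]]) simp
qed

lemma summable_on_toeplitz_pairing:
  assumes f: "f \<in> l2" and g: "g \<in> l2"
  shows "(\<lambda>(j, k). cinner (taylor_coeff \<Phi> k *v f j) (g (j + k))) summable_on UNIV"
proof -
  define d where "d = (\<lambda>(j, k). L * \<sigma> ^ k * (((norm (f j))\<^sup>2 + (norm (g (j + k)))\<^sup>2) / 2))"
  define F where "F = (\<Sum>j. (norm (f j))\<^sup>2)"
  define G where "G = (\<Sum>j. (norm (g j))\<^sup>2)"
  have F: "(\<Sum>j\<le>N. (norm (f j))\<^sup>2) \<le> F" for N
    unfolding F_def using f by (intro sum_le_suminf) (auto simp: l2_def)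
  have G: "(\<Sum>j\<le>N. (norm (g (j + k)))\<^sup>2) \<le> G" for N k
  proof -
    have "(\<Sum>j\<le>N. (norm (g (j + k)))\<^sup>2) = (\<Sum>j\<in>(\<lambda>j. j + k) ` {..N}. (norm (g j))\<^sup>2)"
      by (subst sum.reindex) (auto simp: inj_on_def)
    also have "\<dots> \<le> G"
      unfolding G_def using g by (intro sum_le_suminf) (auto simp: l2_def)
    finally show ?thesis .
  qed
  have FG: "0 \<le> F + G"
    using F[of 0] G[of 0 0] by (smt (verit) zero_le_power2 sum_nonneg)
  have "d summable_on UNIV"
  proof (rule nonneg_summable_on_squares)
    show "0 \<le> d x" for x
      using L_nonneg rate by (auto simp: d_def split: prod.split)
    fix N
    have "(\<Sum>j\<le>N. \<Sum>k\<le>N. d (j, k))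
        = (\<Sum>k\<le>N. \<Sum>j\<le>N. L * \<sigma> ^ k * (((norm (f j))\<^sup>2 + (norm (g (j + k)))\<^sup>2) / 2))"
      by (subst sum.swap) (simp add: d_def)
    also have "\<dots> = (\<Sum>k\<le>N. L * \<sigma> ^ k * (\<Sum>j\<le>N. ((norm (f j))\<^sup>2 + (norm (g (j + k)))\<^sup>2) / 2))"
      by (simp only: sum_distrib_left)
    also have "\<dots> = (\<Sum>k\<le>N. L * \<sigma> ^ k * (((\<Sum>j\<le>N. (norm (f j))\<^sup>2) + (\<Sum>j\<le>N. (norm (g (j + k)))\<^sup>2)) / 2))"
      by (simp only: sum_divide_distrib[symmetric] sum.distrib)
    also have "\<dots> \<le> (\<Sum>k\<le>N. L * \<sigma> ^ k * ((F + G) / 2))"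
      using L_nonneg rate by (intro sum_mono mult_left_mono divide_right_mono add_mono F G) auto
    also have "\<dots> = L * (\<Sum>k\<le>N. \<sigma> ^ k) * ((F + G) / 2)"
      by (simp add: sum_distrib_left sum_distrib_right mult_ac)
    also have "\<dots> \<le> L * (1 / (1 - \<sigma>)) * ((F + G) / 2)"
      using L_nonneg rate FG by (intro mult_right_mono mult_left_mono geometric_partial_sum_le) auto
    finally show "(\<Sum>j\<le>N. \<Sum>k\<le>N. d (j, k)) \<le> L * (1 / (1 - \<sigma>)) * ((F + G) / 2)" .
  qed
  have "norm (cinner (taylor_coeff \<Phi> k *v f j) (g (j + k))) \<le> d (j, k)" for j k
  proof -
    have "norm (cinner (taylor_coeff \<Phi> k *v f j) (g (j + k)))
        \<le> (L * \<sigma> ^ k * norm (f j)) * norm (g (j + k))"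
      by (rule order_trans[OF norm_cinner_le mult_right_mono[OF norm_taylor_coeff_mult_le]]) simp
    also have "\<dots> \<le> L * \<sigma> ^ k * (((norm (f j))\<^sup>2 + (norm (g (j + k)))\<^sup>2) / 2)"
      using L_nonneg rate sum_squares_bound[of "norm (f j)" "norm (g (j + k))"]
      by (simp add: mult.assoc mult_left_mono)
    finally show ?thesis
      by (simp add: d_def)
  qed
  then have "norm ((\<lambda>(j, k). cinner (taylor_coeff \<Phi> k *v f j) (g (j + k))) x) \<le> d x" for x
    by (cases x) simp
  with \<open>d summable_on UNIV\<close> show ?thesis
    unfolding summable_on_iff_abs_summable_on_complex by (rule Infinite_Sum.abs_summable_on_comparison_test')
qed

lemma l2inner_toeplitz:
  assumes f: "f \<in> l2" and g: "g \<in> l2"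
  shows "l2inner (toeplitz \<Phi> f) g = l2inner f (toeplitz_adj \<Phi> g)"
proof -
  define b where "b = (\<lambda>(j, k). cinner (taylor_coeff \<Phi> k *v f j) (g (j + k)))"
  have b: "b summable_on UNIV"
    unfolding b_def by (rule summable_on_toeplitz_pairing[OF f g])
  have "cinner (toeplitz \<Phi> f i) (g i) = (\<Sum>j\<le>i. b (j, i - j))" for i
    unfolding toeplitz_def cinner_sum_left b_def by (intro sum.cong) auto
  then have "l2inner (toeplitz \<Phi> f) g = infsum (\<lambda>i. \<Sum>j\<le>i. b (j, i - j)) UNIV"
    by (simp add: l2inner_def summable_on_suminf[OF summable_on_Cauchy_product_diagonals(1)[OF b]])
  also have "\<dots> = infsum b UNIV"
    by (rule summable_on_Cauchy_product_diagonals(2)[OF b])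
  finally have lhs: "l2inner (toeplitz \<Phi> f) g = infsum b UNIV" .
  have "cinner (f j) (toeplitz_adj \<Phi> g j) = infsum (\<lambda>k. b (j, k)) UNIV" for j
  proof -
    have "(\<lambda>k. cadj (taylor_coeff \<Phi> k) *v g (j + k)) sums toeplitz_adj \<Phi> g j"
      unfolding toeplitz_adj_def by (rule summable_sums[OF summable_toeplitz_adj[OF g]])
    from sums_cinner_right[OF this, of "f j"]
    have "(\<lambda>k. b (j, k)) sums cinner (f j) (toeplitz_adj \<Phi> g j)"
      by (simp add: b_def cinner_cadj)
    then show ?thesis
      by (simp add: sums_iff summable_on_suminf[OF summable_on_rows(1)[OF b]])
  qed
  then have "l2inner f (toeplitz_adj \<Phi> g) = infsum (\<lambda>j. infsum (\<lambda>k. b (j, k)) UNIV) UNIV"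
    by (simp add: l2inner_def summable_on_suminf[OF summable_on_rows(2)[OF b]])
  also have "\<dots> = infsum b UNIV"
    by (rule summable_on_rows(3)[OF b])
  finally show ?thesis
    using lhs by simp
qed

text \<open>If \<open>T\<^sup>*g = 0\<close> then \<open>g \<perp> T f\<close>, so \<open>\<parallel>T f - g\<parallel>\<^sup>2 = \<parallel>T f\<parallel>\<^sup>2 + \<parallel>g\<parallel>\<^sup>2\<close>.\<close>

lemma l2norm_le_dist_toeplitz_range:
  assumes f: "f \<in> l2" and g: "g \<in> l2" and g0: "toeplitz_adj \<Phi> g = (\<lambda>_. 0)"
  shows "sqrt (\<Sum>j. (norm (g j))\<^sup>2) \<le> l2norm (\<lambda>i. toeplitz \<Phi> f i - g i)"
proof -
  have Tf: "toeplitz \<Phi> f \<in> l2"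
    by (rule toeplitz_in_l2[OF f])
  have sT: "summable (\<lambda>i. (norm (toeplitz \<Phi> f i))\<^sup>2)" and sg: "summable (\<lambda>i. (norm (g i))\<^sup>2)"
    using Tf g by (simp_all add: l2_def)
  have sc: "summable (\<lambda>i. Re (cinner (toeplitz \<Phi> f i) (g i)))"
    by (rule summable_Re[OF l2inner_summable[OF Tf g]])
  have "(\<Sum>i. Re (cinner (toeplitz \<Phi> f i) (g i))) = Re (l2inner (toeplitz \<Phi> f) g)"
    by (simp add: l2inner_def Re_suminf[OF l2inner_summable[OF Tf g]])
  also have "\<dots> = 0"
    using l2inner_toeplitz[OF f g] g0 by (simp add: l2inner_def)
  finally have orth: "(\<Sum>i. Re (cinner (toeplitz \<Phi> f i) (g i))) = 0" .
  have "(\<Sum>i. (norm (toeplitz \<Phi> f i - g i))\<^sup>2)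
      = (\<Sum>i. (norm (toeplitz \<Phi> f i))\<^sup>2) + (\<Sum>i. (norm (g i))\<^sup>2) - 2 * (\<Sum>i. Re (cinner (toeplitz \<Phi> f i) (g i)))"
    unfolding norm_diff_sq_cinner
    using suminf_diff[OF summable_add[OF sT sg] summable_mult[OF sc]] suminf_add[OF sT sg] suminf_mult[OF sc]
    by simp
  then have "(\<Sum>j. (norm (g j))\<^sup>2) \<le> (\<Sum>i. (norm (toeplitz \<Phi> f i - g i))\<^sup>2)"
    using orth suminf_nonneg[OF sT] by simp
  then show ?thesis
    by (simp add: l2norm_def)
qed

lemma toeplitz_adj_injective:
  assumes dense: "\<forall>g\<in>l2. \<forall>\<epsilon>>0. \<exists>f\<in>l2. l2norm (\<lambda>i. toeplitz \<Phi> f i - g i) < \<epsilon>"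
    and g: "g \<in> l2" and g0: "toeplitz_adj \<Phi> g = (\<lambda>_. 0)"
  shows "g = (\<lambda>_. 0)"
proof -
  have s: "summable (\<lambda>j. (norm (g j))\<^sup>2)"
    using g by (simp add: l2_def)
  have small: "sqrt (\<Sum>j. (norm (g j))\<^sup>2) < \<epsilon>" if "\<epsilon> > 0" for \<epsilon>
    using dense g that l2norm_le_dist_toeplitz_range[OF _ g g0] by (meson le_less_trans)
  have "\<not> 0 < sqrt (\<Sum>j. (norm (g j))\<^sup>2)"
    using small by blast
  then have "sqrt (\<Sum>j. (norm (g j))\<^sup>2) \<le> 0"
    by simp
  then have "(\<Sum>j. (norm (g j))\<^sup>2) = 0"
    using suminf_nonneg[OF s] by simp
  then show ?thesis
    using suminf_eq_zero_iff[OF s] by (simp add: fun_eq_iff)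
qed

end

section \<open>Orthogonal projection onto a subspace of \<open>\<complex>\<^sup>n\<close>\<close>

lemma inner_eq_Re_cinner: "inner x y = Re (cinner x (y :: complex^'n))"
  by (simp add: inner_vec_def cinner_def inner_complex_def Re_sum)

lemma vec_subspace_imp_subspace: "vec.subspace X \<Longrightarrow> Real_Vector_Spaces.subspace (X :: (complex^'n) set)"
  unfolding vec.subspace_def Real_Vector_Spaces.subspace_def by (simp add: scaleR_eq_of_real_scale)

text \<open>The real orthogonal decomposition is already complex-orthogonal, because a complex
  subspace is invariant under multiplication by \<open>\<i>\<close>.\<close>

lemma cproj_exists:
  assumes X: "vec.subspace X"
  shows "\<exists>y\<in>X. \<forall>z\<in>X. cinner (x - y) z = 0"
proof -
  have span: "Real_Vector_Spaces.span X = X"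
    using vec_subspace_imp_subspace[OF X] by simp
  obtain y w where y: "y \<in> X" and w: "\<And>z. z \<in> X \<Longrightarrow> inner w z = 0" and x: "x = y + w"
    using orthogonal_subspace_decomp_exists[of X x] unfolding real_inner_class.orthogonal_def span by metis
  have "cinner w z = 0" if z: "z \<in> X" for z
  proof -
    have "Re (cinner w z) = 0" "Re (cinner w (\<i> *s z)) = 0"
      using w[OF z] w[OF vec.subspace_scale[OF X z]] by (simp_all add: inner_eq_Re_cinner)
    then show ?thesis
      by (simp add: cinner_scale_right complex_eq_iff)
  qed
  then show ?thesis
    using x y by (intro bexI[of _ y]) simp_all
qed

lemma cproj_eqI:
  assumes X: "vec.subspace X" and y: "y \<in> X" and orth: "\<And>z. z \<in> X \<Longrightarrow> cinner (x - y) z = 0"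
  shows "cproj X x = y"
  unfolding cproj_def
proof (rule the_equality)
  show "y \<in> X \<and> (\<forall>z\<in>X. cinner (x - y) z = 0)"
    using y orth by blast
  fix y' assume y': "y' \<in> X \<and> (\<forall>z\<in>X. cinner (x - y') z = 0)"
  have d: "y' - y \<in> X"
    using vec.subspace_diff[OF X] y y' by blast
  have "cinner (y' - y) (y' - y) = cinner (x - y) (y' - y) - cinner (x - y') (y' - y)"
    by (simp add: cinner_diff_left algebra_simps)
  also have "\<dots> = 0"
    using orth[OF d] y' d by simp
  finally show "y' = y"
    by (simp add: cinner_self_eq_0_iff)
qed

lemma cproj_in: "vec.subspace X \<Longrightarrow> cproj X x \<in> X"
  using cproj_exists cproj_eqI by metis

lemma cproj_orthogonal: "vec.subspace X \<Longrightarrow> z \<in> X \<Longrightarrow> cinner (x - cproj X x) z = 0"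
  using cproj_exists cproj_eqI by metis

lemma linear_cproj:
  fixes X :: "(complex^'n) set"
  assumes X: "vec.subspace X"
  shows "Vector_Spaces.linear (*s) (*s) (cproj X)"
proof unfold_locales
  fix a b :: "complex^'n" and c :: complex
  show "cproj X (a + b) = cproj X a + cproj X b"
  proof (rule cproj_eqI[OF X])
    show "cproj X a + cproj X b \<in> X"
      by (rule vec.subspace_add[OF X cproj_in[OF X] cproj_in[OF X]])
    fix z assume z: "z \<in> X"
    have eq: "a + b - (cproj X a + cproj X b) = (a - cproj X a) + (b - cproj X b)"
      by simp
    show "cinner (a + b - (cproj X a + cproj X b)) z = 0"
      unfolding eq cinner_add_left cproj_orthogonal[OF X z] by simp
  qed
  show "cproj X (c *s a) = c *s cproj X a"
  proof (rule cproj_eqI[OF X])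
    show "c *s cproj X a \<in> X"
      by (rule vec.subspace_scale[OF X cproj_in[OF X]])
    fix z assume z: "z \<in> X"
    have eq: "c *s a - c *s cproj X a = c *s (a - cproj X a)"
      by (simp add: vector_ssub_ldistrib)
    show "cinner (c *s a - c *s cproj X a) z = 0"
      unfolding eq cinner_scale_left cproj_orthogonal[OF X z] by simp
  qed
qed

text \<open>The compression of a matrix that is definite on \<open>X\<close> is an automorphism of \<open>X\<close>:
  it is injective there, hence onto by dimension count.\<close>

lemma compression_bij_betw:
  assumes X: "vec.subspace X"
    and definite: "\<And>x. x \<in> X \<Longrightarrow> cinner (Q *v x) x = 0 \<Longrightarrow> x = 0"
  shows "bij_betw (\<lambda>x. cproj X (Q *v x)) X X"
proof -
  let ?f = "\<lambda>x. cproj X (Q *v x)"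
  have lin: "Vector_Spaces.linear (*s) (*s) ?f"
    using Vector_Spaces.linear_compose[OF matrix_vector_mul_linear_gen linear_cproj[OF X]]
    by (simp add: o_def)
  have "x = 0" if x: "x \<in> X" and fx: "?f x = 0" for x
  proof -
    have "cinner (Q *v x) x = cinner (Q *v x - ?f x) x"
      using fx by simp
    also have "\<dots> = 0"
      by (rule cproj_orthogonal[OF X x])
    finally show "x = 0"
      by (rule definite[OF x])
  qed
  then have inj: "inj_on ?f X"
    using vec.linear_inj_on_iff_eq_0[OF lin X] by blast
  have "?f ` X = X"
  proof (rule vec.subspace_dim_equal)
    show "vec.subspace (?f ` X)"
      by (rule vec.linear_subspace_image[OF lin X])
    show "?f ` X \<subseteq> X"
      using cproj_in[OF X] by blast
    have span: "vec.span X = X"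
      using X by simp
    show "vec.dim X \<le> vec.dim (?f ` X)"
      using vec.dim_image_eq[OF lin, of X] inj unfolding span by simp
  qed (rule X)
  with inj show ?thesis
    by (simp add: bij_betw_def)
qed

context decaying_symbol
begin

lemma subspace_toeplitz_adj_preimage: "vec.subspace {x. Wobs C A x \<in> toeplitz_adj \<Phi> ` l2}"
  unfolding vec.subspace_def
proof (intro conjI ballI allI)
  show "0 \<in> {x. Wobs C A x \<in> toeplitz_adj \<Phi> ` l2}"
    using l2_zero by (force simp: Wobs_zero toeplitz_adj_zero)
next
  fix x y assume "x \<in> {x. Wobs C A x \<in> toeplitz_adj \<Phi> ` l2}" "y \<in> {x. Wobs C A x \<in> toeplitz_adj \<Phi> ` l2}"
  then obtain f g where "f \<in> l2" "g \<in> l2" "Wobs C A x = toeplitz_adj \<Phi> f" "Wobs C A y = toeplitz_adj \<Phi> g"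
    by auto
  then show "x + y \<in> {x. Wobs C A x \<in> toeplitz_adj \<Phi> ` l2}"
    using l2_add by (force simp: Wobs_add toeplitz_adj_add)
next
  fix c x assume "x \<in> {x. Wobs C A x \<in> toeplitz_adj \<Phi> ` l2}"
  then obtain f where "f \<in> l2" "Wobs C A x = toeplitz_adj \<Phi> f"
    by auto
  then show "c *s x \<in> {x. Wobs C A x \<in> toeplitz_adj \<Phi> ` l2}"
    using l2_scale by (force simp: Wobs_scale toeplitz_adj_scale)
qed

text \<open>Since \<open>T\<^sup>*\<close> is injective, \<open>T\<^sup>* f = W x = T\<^sup>* (V x)\<close> forces \<open>f = V x\<close>.\<close>

lemma toeplitz_adj_preimage_eq_image:
  assumes dense: "\<forall>g\<in>l2. \<forall>\<epsilon>>0. \<exists>f\<in>l2. l2norm (\<lambda>i. toeplitz \<Phi> f i - g i) < \<epsilon>"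
    and X: "X = {x. W x \<in> toeplitz_adj \<Phi> ` l2}"
    and V: "\<And>x. V x \<in> l2" and factor: "\<And>x. x \<in> X \<Longrightarrow> W x = toeplitz_adj \<Phi> (V x)"
  shows "{f \<in> l2. toeplitz_adj \<Phi> f \<in> range W} = V ` X"
proof (intro equalityI subsetI)
  fix f assume "f \<in> {f \<in> l2. toeplitz_adj \<Phi> f \<in> range W}"
  then obtain x where f: "f \<in> l2" and x: "toeplitz_adj \<Phi> f = W x"
    by auto
  then have "x \<in> X"
    unfolding X by (auto simp flip: x)
  then have "toeplitz_adj \<Phi> (\<lambda>j. f j - V x j) = (\<lambda>_. 0)"
    using factor x by (simp add: toeplitz_adj_diff[OF f V])
  then have "(\<lambda>j. f j - V x j) = (\<lambda>_. 0)"
    by (rule toeplitz_adj_injective[OF dense l2_diff[OF f V]])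
  then show "f \<in> V ` X"
    using \<open>x \<in> X\<close> by (auto simp: fun_eq_iff)
next
  fix f assume "f \<in> V ` X"
  then show "f \<in> {f \<in> l2. toeplitz_adj \<Phi> f \<in> range W}"
    using V factor by (auto simp flip: factor)
qed

end

context decaying_powers
begin

lemma l2proj_Wobs_image:
  assumes X: "vec.subspace X" and x: "x \<in> X" and f: "f \<in> l2"
    and eq: "cproj X (obs_gramian C A *v x) = cproj X (Wobs_adj C A f)"
  shows "l2proj (Wobs C A ` X) f = Wobs C A x"
proof (rule l2proj_eqI)
  show "Wobs C A ` X \<subseteq> l2"
    using Wobs_in_l2 by blast
  show "(\<lambda>j. g j - h j) \<in> Wobs C A ` X" if "g \<in> Wobs C A ` X" "h \<in> Wobs C A ` X" for g h
    using that vec.subspace_diff[OF X] by (auto simp flip: Wobs_diff)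
  show "Wobs C A x \<in> Wobs C A ` X"
    using x by blast
  show "l2inner (\<lambda>j. f j - Wobs C A x j) h = 0" if h: "h \<in> Wobs C A ` X" for h
  proof -
    obtain z where z: "z \<in> X" "h = Wobs C A z"
      using h by blast
    have "l2inner (\<lambda>j. f j - Wobs C A x j) h = cinner (Wobs_adj C A f) z - cinner (obs_gramian C A *v x) z"
      using z by (simp add: l2inner_diff_left[OF f Wobs_in_l2 Wobs_in_l2] cinner_Wobs_adj[OF f] l2inner_Wobs)
    also have "\<dots> = cinner (Wobs_adj C A f - cproj X (Wobs_adj C A f)) z
        - cinner (obs_gramian C A *v x - cproj X (obs_gramian C A *v x)) z"
      by (simp add: eq cinner_diff_left)
    also have "\<dots> = 0"
      by (simp add: cproj_orthogonal[OF X z(1)])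
    finally show ?thesis .
  qed
qed (rule f)

end

theorem lemma2p5:
  fixes A :: "complex^'n^'n" and C :: "complex^'n^'m" and \<Gamma> :: "complex^'m^'n"
    and R0 :: "complex^'m^'m" and R :: "complex \<Rightarrow> complex^'m^'m"
    and \<Phi> :: "complex \<Rightarrow> complex^'m^'r" and C\<Phi> :: "complex^'n^'r"
    and X :: "(complex^'n) set" and M :: "(nat \<Rightarrow> complex^'r) set"
    and Q :: "complex^'n^'n"
    and \<Omega> :: "complex^'n \<Rightarrow> complex^'n" and \<Delta> :: "complex^'n \<Rightarrow> complex^'n"
  assumes A_stable: "stable A"
    and R_def: "\<And>z. R z = csmat z (C ** matrix_inv (mat 1 - csmat z A) ** \<Gamma>) + R0
                         + cadj \<Gamma> ** matrix_inv (csmat z (mat 1) - cadj A) ** cadj C"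
    and R_nonzero: "\<exists>z. det (mat 1 - csmat z A) \<noteq> 0 \<and> det (csmat z (mat 1) - cadj A) \<noteq> 0
                        \<and> R z \<noteq> 0"
    and R_psd: "\<And>\<zeta>. norm \<zeta> = 1 \<Longrightarrow> psd (R \<zeta>)"
    and obs: "observable C A"
    and outer: "outer_spectral_factor R
                  (\<lambda>z. det (mat 1 - csmat z A) \<noteq> 0 \<and> det (csmat z (mat 1) - cadj A) \<noteq> 0) \<Phi>"
    and X_def: "X = {x. Wobs C A x \<in> toeplitz_adj \<Phi> ` l2}"
    and C\<Phi>_realiz: "\<And>z. det (mat 1 - csmat z A) \<noteq> 0 \<Longrightarrow> regular_at \<Phi> z \<Longrightarrow>
                      \<Phi> z = \<Phi> 0 + csmat z (C\<Phi> ** matrix_inv (mat 1 - csmat z A) ** \<Gamma>)"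
    and C\<Phi>_X: "\<And>x. x \<in> X \<Longrightarrow> Wobs C A x = toeplitz_adj \<Phi> (Wobs C\<Phi> A x)"
    and Q_def: "Q = obs_gramian C\<Phi> A"
    and \<Omega>_def: "\<And>x. \<Omega> x = cproj X (Q *v x)"
    and \<Delta>_def: "\<And>y. \<Delta> y = (THE x. x \<in> X \<and> \<Omega> x = cproj X y)"
    and M_def: "M = {f \<in> l2. toeplitz_adj \<Phi> f \<in> range (Wobs C A)}"
  shows "bij_betw \<Omega> X X
         \<and> (\<forall>f\<in>l2. l2proj M f = Wobs C\<Phi> A (\<Delta> (Wobs_adj C\<Phi> A f)))"
proof -
  obtain K \<rho> where "decaying_powers A K \<rho>"
    using stable_mpow_decay[OF A_stable] unfolding decaying_powers_def by blast
  then interpret W: decaying_powers A K \<rho> .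
  have rat: "rat_Hinf \<Phi>" and dense: "\<forall>g\<in>l2. \<forall>\<epsilon>>0. \<exists>f\<in>l2. l2norm (\<lambda>i. toeplitz \<Phi> f i - g i) < \<epsilon>"
    using outer by (simp_all add: outer_spectral_factor_def)
  obtain L \<sigma> where "decaying_symbol \<Phi> L \<sigma>"
    using rat_Hinf_taylor_decay[OF rat] unfolding decaying_symbol_def by blast
  then interpret T: decaying_symbol \<Phi> L \<sigma> .
  have X: "vec.subspace X"
    unfolding X_def by (rule T.subspace_toeplitz_adj_preimage)
  have "x = 0" if "x \<in> X" "cinner (Q *v x) x = 0" for x
  proof -
    have "l2inner (Wobs C\<Phi> A x) (Wobs C\<Phi> A x) = 0"
      using that by (simp add: Q_def W.l2inner_Wobs)
    then have "Wobs C\<Phi> A x = (\<lambda>_. 0)"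
      using l2inner_self_eq_0_iff[OF W.Wobs_in_l2] by blast
    then have "Wobs C A x = (\<lambda>_. 0)"
      using C\<Phi>_X[OF \<open>x \<in> X\<close>] by (simp add: T.toeplitz_adj_zero)
    then show "x = 0"
      using obs by (simp add: observable_def Wobs_def fun_eq_iff)
  qed
  then have bij: "bij_betw \<Omega> X X"
    using compression_bij_betw[OF X] by (simp add: \<Omega>_def[abs_def])
  have M: "M = Wobs C\<Phi> A ` X"
    unfolding M_def by (rule T.toeplitz_adj_preimage_eq_image[OF dense X_def W.Wobs_in_l2 C\<Phi>_X])
  have "l2proj M f = Wobs C\<Phi> A (\<Delta> (Wobs_adj C\<Phi> A f))" if "f \<in> l2" for f
  proof -
    have "\<Delta> (Wobs_adj C\<Phi> A f) = the_inv_into X \<Omega> (cproj X (Wobs_adj C\<Phi> A f))"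
      by (simp add: \<Delta>_def the_inv_into_def)
    moreover have "cproj X (Wobs_adj C\<Phi> A f) \<in> X"
      by (rule cproj_in[OF X])
    ultimately have "\<Delta> (Wobs_adj C\<Phi> A f) \<in> X" "\<Omega> (\<Delta> (Wobs_adj C\<Phi> A f)) = cproj X (Wobs_adj C\<Phi> A f)"
      using bij by (auto intro: the_inv_into_into f_the_inv_into_f_bij_betw simp: bij_betw_def)
    then show ?thesis
      unfolding M using W.l2proj_Wobs_image[OF X _ that] by (simp add: \<Omega>_def Q_def)
  qed
  with bij show ?thesis
    by blast
qed

end
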